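(* For all $i\in I_d$, the element $\hat x_i^l$ of $\mathcal{S}^f_d$ lies in $F_{l-1}\mathcal{S}^f_d$, and its image $\operatorname{gr}_{l-1}\hat x_i^l$ in $F_{l-1}\mathcal{S}^f_d/F_{l-2}\mathcal{S}^f_d\subseteq\operatorname{gr}\mathcal{S}^f_d$ equals $y_i(l)=\sum_{j=1}^{i-1}(i,j)^{(0)}$.
   Context: Fix a commutative ring $R$ and integers $l,d\ge1$; $I_a=\{1,\dots,a\}$. $\mathcal{S}_d$ is the superalgebra over $R$ generated by even $\hat s_1,\dots,\hat s_{d-1}$, $\hat x_1,\dots,\hat x_d$ and odd $\hat c_1,\dots,\hat c_d$ with relations: the $\hat s_i$ satisfy the Coxeter relations of $\Sigma_d$; the $\hat x_i$ commute; $\hat c_i^2=1$, $\hat c_i\hat c_j=-\hat c_j\hat c_i$ ($i\neq j$); $\hat x_i\hat c_i=-\hat c_i\hat x_i$, $\hat x_i\hat c_j=\hat c_j\hat x_i$ ($j\ne i$); $\hat s_i\hat c_i=\hat c_{i+1}\hat s_i$, $\hat s_i\hat c_j=\hat c_j\hat s_i$ ($j\ne i,i+1$); $\hat s_i\hat x_i=\hat x_{i+1}\hat s_i-1-\hat c_i\hat c_{i+1}$, $\hat s_i\hat x_j=\hat x_j\hat s_i$ ($j\ne i,i+1$). Let $f(x)=x^l+b_{l-2}x^{l-2}+b_{l-4}x^{l-4}+\cdots\in R[x]$ (monic of degree $l$, all terms of the same parity as $l$), and $\mathcal{S}^f_d=\mathcal{S}_d/(f(\hat x_1))$. $F_k\mathcal{S}^f_d$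 is the span of products of generators with at most $k$ polynomial generators $\hat x_j$. The associated graded $\operatorname{gr}\mathcal{S}^f_d$ is identified (via $\hat x_i\mapsto x_i$, $\hat s_i\mapsto(i,i+1)$, $\hat c_i\mapsto c_i$) with the $R$-superalgebra $\mathcal{G}$ free on $\{x_1^{m_1}\cdots x_d^{m_d}wc_1^{e_1}\cdots c_d^{e_d}:0\le m_i\le l-1, w\in\Sigma_d, e_i\in\{0,1\}\}$ with: $x_i$ commuting, $x_i^l=0$; $\Sigma_d$ multiplied as a group (composition right to left); $c_i^2=1$, $c_ic_j=-c_jc_i$; $wx_i=x_{w(i)}w$, $wc_i=c_{w(i)}w$; $x_ic_i=-c_ix_i$, $x_ic_j=c_jx_i$ ($i\neq j$); $\operatorname{gr}_k$ denotes the map $F_k\to F_k/F_{k-1}$. For an ordered tuple $A=(i_1,\dots,i_a)$ of distinct elements of $I_d$, $\sigma_A$ is the cycle $i_1\mapsto\dots\mapsto i_a\mapsto i_1$. For $\alpha\in\mathbb{Z}_2^a$: $|\alpha|=\sum\alpha_j$; $\mathbb{Z}_2^{a,\mathrm{ev}}$ the $\alpha$ with $|\alpha|$ even; $c_\alpha(A)=c_{i_1}^{\alpha_1}\cdots c_{i_a}^{\alpha_a}$; $\epsilon^\alpha_j=\prod_{k<j}(-1)^{\alpha_k}$; $h^\alpha_r(A)=\sum_{r_1+\dots+r_a=(a-1)(l-1)+r,\,r_j\ge0}\prod_j(\epsilon^\alpha_jx_{i_j})^{r_j}$; $A^{(r,\alpha)}=h^\alpha_r(A)\sigma_Ac_\alpha(A)$;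 $\tau_\alpha=(-1)^{|\alpha|/2+\sum_j j\alpha_j}$; $A^{(r)}=\sum_{\alpha\in\mathbb{Z}_2^{a,\mathrm{ev}}}\tau_\alpha A^{(r,\alpha)}$. In particular $(i,j)^{(0)}$ is $A^{(0)}$ for $A=(i,j)$. *)

theory Defs
  imports "HOL-Library.Poly_Mapping" "HOL-Computational_Algebra.Polynomial"
begin

datatype gen = S nat | X nat | C nat

datatype word = Word "gen list"

fun word_list :: "word \<Rightarrow> gen list" where "word_list (Word w) = w"

instantiation word :: monoid_add
begin
definition zero_word :: word where "zero_word = Word []"
definition plus_word :: "word \<Rightarrow> word \<Rightarrow> word" where
  "plus_word u v = Word (word_list u @ word_list v)"
instance
proof
  fix a b c :: word
  show "a + b + c = a + (b + c)" by (cases a; cases b; cases c) (simp add: plus_word_def)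
  show "0 + a = a" by (cases a) (simp add: plus_word_def zero_word_def)
  show "a + 0 = a" by (cases a) (simp add: plus_word_def zero_word_def)
qed
end

text \<open>The free associative R-algebra on the generators: finitely supported R-valued
  functions on words, with the convolution product (a ring_1 by the Poly_Mapping library).\<close>
type_synonym 'r FA = "word \<Rightarrow>\<^sub>0 'r"

definition gen_el :: "gen \<Rightarrow> 'r::comm_ring_1 FA" where
  "gen_el g = Poly_Mapping.single (Word [g]) 1"

definition sc :: "'r \<Rightarrow> 'r::comm_ring_1 FA" where
  "sc r = Poly_Mapping.single (Word []) r"

abbreviation sh :: "nat \<Rightarrow> 'r::comm_ring_1 FA" where "sh i \<equiv> gen_el (S i)"
abbreviation xh :: "nat \<Rightarrow> 'r::comm_ring_1 FA" where "xh i \<equiv> gen_el (X i)"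
abbreviation ch :: "nat \<Rightarrow> 'r::comm_ring_1 FA" where "ch i \<equiv> gen_el (C i)"

text \<open>Generators with indices
  outside the ranges (s_i for i \<notin> 1..d-1, x_i, c_i for i \<notin> 1..d) are killed, so that the
  quotient is exactly the algebra generated by the listed generators.\<close>
definition relators :: "nat \<Rightarrow> 'r::comm_ring_1 poly \<Rightarrow> 'r FA set" where
  "relators d f =
     {sh i | i. i < 1 \<or> i > d - 1} \<union> {xh i | i. i < 1 \<or> i > d} \<union> {ch i | i. i < 1 \<or> i > d}
   \<comment> \<open>Coxeter relations of Sigma_d\<close>
   \<union> {sh i * sh i - 1 | i. 1 \<le> i \<and> i \<le> d - 1}
   \<union> {sh i * sh (i+1) * sh i - sh (i+1) * sh i * sh (i+1) | i. 1 \<le> i \<and> i + 1 \<le> d - 1}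
   \<union> {sh i * sh j - sh j * sh i | i j. 1 \<le> i \<and> i \<le> d - 1 \<and> 1 \<le> j \<and> j \<le> d - 1
                                      \<and> (i + 1 < j \<or> j + 1 < i)}
   \<comment> \<open>polynomial generators commute\<close>
   \<union> {xh i * xh j - xh j * xh i | i j. i \<in> {1..d} \<and> j \<in> {1..d}}
   \<comment> \<open>Clifford relations\<close>
   \<union> {ch i * ch i - 1 | i. i \<in> {1..d}}
   \<union> {ch i * ch j + ch j * ch i | i j. i \<in> {1..d} \<and> j \<in> {1..d} \<and> i \<noteq> j}
   \<comment> \<open>x and c\<close>
   \<union> {xh i * ch i + ch i * xh i | i. i \<in> {1..d}}
   \<union> {xh i * ch j - ch j * xh i | i j. i \<in> {1..d} \<and> j \<in> {1..d} \<and> i \<noteq> j}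
   \<comment> \<open>s and c\<close>
   \<union> {sh i * ch i - ch (i+1) * sh i | i. 1 \<le> i \<and> i \<le> d - 1}
   \<union> {sh i * ch j - ch j * sh i | i j. 1 \<le> i \<and> i \<le> d - 1 \<and> j \<in> {1..d} \<and> j \<noteq> i \<and> j \<noteq> i + 1}
   \<comment> \<open>s and x\<close>
   \<union> {sh i * xh i - (xh (i+1) * sh i - 1 - ch i * ch (i+1)) | i. 1 \<le> i \<and> i \<le> d - 1}
   \<union> {sh i * xh j - xh j * sh i | i j. 1 \<le> i \<and> i \<le> d - 1 \<and> j \<in> {1..d} \<and> j \<noteq> i \<and> j \<noteq> i + 1}
   \<comment> \<open>the cyclotomic-type relation f(hat x_1) = 0\<close>
   \<union> {(\<Sum>k\<le>degree f. sc (coeff f k) * xh 1 ^ k)}"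

inductive_set two_sided_ideal :: "'r::comm_ring_1 FA set \<Rightarrow> 'r FA set" for G where
  gen: "g \<in> G \<Longrightarrow> g \<in> two_sided_ideal G"
| zero: "0 \<in> two_sided_ideal G"
| add: "a \<in> two_sided_ideal G \<Longrightarrow> b \<in> two_sided_ideal G \<Longrightarrow> a + b \<in> two_sided_ideal G"
| lmult: "a \<in> two_sided_ideal G \<Longrightarrow> u * a \<in> two_sided_ideal G"
| rmult: "a \<in> two_sided_ideal G \<Longrightarrow> a * u \<in> two_sided_ideal G"

text \<open>Elements of S^f_d are represented by elements of the free algebra; two represent the
  same element of S^f_d iff their difference lies in the ideal below.\<close>
definition ideal_Sf :: "nat \<Rightarrow> 'r::comm_ring_1 poly \<Rightarrow> 'r FA set" where
  "ideal_Sf d f = two_sided_ideal (relators d f)"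

definition num_x :: "word \<Rightarrow> nat" where
  "num_x w = length (filter (\<lambda>g. case g of X _ \<Rightarrow> True | _ \<Rightarrow> False) (word_list w))"

text \<open>The class of a lies in F_k S^f_d iff a is congruent modulo the ideal to an R-linear
  combination of words (products of generators) with at most k polynomial generators.
  k is an integer, so that F_k = 0 for k < 0.\<close>
definition in_F :: "nat \<Rightarrow> 'r::comm_ring_1 poly \<Rightarrow> int \<Rightarrow> 'r FA \<Rightarrow> bool" where
  "in_F d f k a \<longleftrightarrow> (\<exists>p. (\<forall>w\<in>Poly_Mapping.keys p. int (num_x w) \<le> k) \<and> a - p \<in> ideal_Sf d f)"

definition lprod :: "'r::comm_ring_1 FA list \<Rightarrow> 'r FA" where
  "lprod xs = foldr (*) xs 1"

definition simple_transp :: "nat \<Rightarrow> nat \<Rightarrow> nat" where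
  "simple_transp i = id(i := i + 1, i + 1 := i)"

definition perm_of_word :: "nat list \<Rightarrow> nat \<Rightarrow> nat" where
  "perm_of_word ws = foldr (\<lambda>i p. simple_transp i \<circ> p) ws id"

text \<open>Lift hat w of a permutation w of Sigma_d: the product of the hat s_i along some word
  representing w (all such words give the same element of S_d by the Coxeter relations).\<close>
definition perm_hat :: "nat \<Rightarrow> (nat \<Rightarrow> nat) \<Rightarrow> 'r::comm_ring_1 FA" where
  "perm_hat d w = lprod (map sh (SOME ws. set ws \<subseteq> {1..<d} \<and> perm_of_word ws = w))"

definition cycle_of :: "nat list \<Rightarrow> nat \<Rightarrow> nat" where
  "cycle_of A x = (if x \<in> set A
      then A ! (Suc (THE k. k < length A \<and> A ! k = x) mod length A) else x)"

text \<open>alpha in Z_2^a is a bool list of length a (True = 1).  Indices j are 1-based in the paper;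
  here position k (0-based) corresponds to j = k+1.\<close>
definition abs_alpha :: "bool list \<Rightarrow> nat" where
  "abs_alpha \<alpha> = length (filter id \<alpha>)"

text \<open>epsilon^alpha_j = prod_{k<j} (-1)^{alpha_k}, for 0-based position k0 = j-1.\<close>
definition eps_alpha :: "bool list \<Rightarrow> nat \<Rightarrow> 'r::comm_ring_1" where
  "eps_alpha \<alpha> k0 = (\<Prod>k<k0. (if \<alpha> ! k then -1 else 1))"

definition h_hat :: "nat \<Rightarrow> bool list \<Rightarrow> nat \<Rightarrow> nat list \<Rightarrow> 'r::comm_ring_1 FA" where
  "h_hat l \<alpha> r A =
     (\<Sum>rs\<in>{rs. length rs = length A \<and> sum_list rs = (length A - 1) * (l - 1) + r}.
        lprod (map (\<lambda>k. (sc (eps_alpha \<alpha> k) * xh (A ! k)) ^ (rs ! k)) [0..<length A]))"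

definition c_alpha_hat :: "bool list \<Rightarrow> nat list \<Rightarrow> 'r::comm_ring_1 FA" where
  "c_alpha_hat \<alpha> A = lprod (map (\<lambda>k. if \<alpha> ! k then ch (A ! k) else 1) [0..<length A])"

definition tau_alpha :: "bool list \<Rightarrow> 'r::comm_ring_1" where
  "tau_alpha \<alpha> = (-1) ^ (abs_alpha \<alpha> div 2 + (\<Sum>k<length \<alpha>. if \<alpha> ! k then k + 1 else 0))"

definition A_r_alpha_hat :: "nat \<Rightarrow> nat \<Rightarrow> nat list \<Rightarrow> nat \<Rightarrow> bool list \<Rightarrow> 'r::comm_ring_1 FA" where
  "A_r_alpha_hat d l A r \<alpha> = h_hat l \<alpha> r A * perm_hat d (cycle_of A) * c_alpha_hat \<alpha> A"

definition A_r_hat :: "nat \<Rightarrow> nat \<Rightarrow> nat list \<Rightarrow> nat \<Rightarrow> 'r::comm_ring_1 FA" where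
  "A_r_hat d l A r =
     (\<Sum>\<alpha>\<in>{\<alpha>. length \<alpha> = length A \<and> even (abs_alpha \<alpha>)}. sc (tau_alpha \<alpha>) * A_r_alpha_hat d l A r \<alpha>)"

definition y_hat :: "nat \<Rightarrow> nat \<Rightarrow> nat \<Rightarrow> 'r::comm_ring_1 FA" where
  "y_hat d l i = (\<Sum>j\<in>{1..<i}. A_r_hat d l [i, j] 0)"

end

theory Submission
  imports Defs
begin

text \<open>Put \<open>u\<^sub>i = (1 + c\<^sub>i c\<^sub>i\<^sub>+\<^sub>1) s\<^sub>i\<close>, so that the relation between \<open>s\<^sub>i\<close> and \<open>x\<^sub>i\<close> reads
  \<open>x\<^sub>i\<^sub>+\<^sub>1 = s\<^sub>i x\<^sub>i s\<^sub>i + u\<^sub>i\<close>.  The filtration by the number of polynomial generators is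
  multiplicative, and \<open>s\<^sub>i\<close>, \<open>c\<^sub>i\<close>, \<open>u\<^sub>i\<close> lie in \<open>F\<^sub>0\<close>; hence modulo \<open>F\<^sub>l\<^sub>-\<^sub>2\<close> the power
  \<open>x\<^sub>i\<^sub>+\<^sub>1\<^sup>l\<close> is \<open>(s\<^sub>i x\<^sub>i s\<^sub>i)\<^sup>l = s\<^sub>i x\<^sub>i\<^sup>l s\<^sub>i\<close> plus the terms linear in \<open>u\<^sub>i\<close>, namely
  \<open>\<Sum>\<^sub>a x\<^sub>i\<^sub>+\<^sub>1\<^sup>a u\<^sub>i x\<^sub>i\<^sub>+\<^sub>1\<^sup>l\<^sup>-\<^sup>1\<^sup>-\<^sup>a\<close>.  Moving \<open>s\<^sub>i\<close> to the right in these terms produces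
  \<open>(i + 1, i)\<^sup>(\<^sup>0\<^sup>)\<close>, and conjugating \<open>(i, j)\<^sup>(\<^sup>0\<^sup>)\<close> by \<open>s\<^sub>i\<close> gives \<open>(i + 1, j)\<^sup>(\<^sup>0\<^sup>)\<close>, both
  up to \<open>F\<^sub>l\<^sub>-\<^sub>2\<close>.  So \<open>x\<^sub>i\<^sup>l \<equiv> y\<^sub>i(l)\<close> modulo \<open>F\<^sub>l\<^sub>-\<^sub>2\<close> follows by induction on \<open>i\<close>, starting from
  \<open>x\<^sub>1\<^sup>l \<in> F\<^sub>l\<^sub>-\<^sub>2\<close>, which holds because \<open>f(x\<^sub>1) = 0\<close> and \<open>f - x\<^sup>l\<close> has degree at most \<open>l - 2\<close>.
  Identifying the lifts \<open>\<sigma>\<^sub>A\<close> with products of the \<open>s\<^sub>i\<close> requires that the Coxeter relations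
  present the symmetric group.\<close>

section \<open>Filtered rings\<close>

definition power_linear_term :: "'a::ring_1 \<Rightarrow> 'a \<Rightarrow> nat \<Rightarrow> 'a" where
  "power_linear_term B v n = (\<Sum>a<n. B ^ a * v * B ^ (n - 1 - a))"

lemma power_linear_term_Suc:
  "power_linear_term B v (Suc n) = B ^ n * v + power_linear_term B v n * B"
proof -
  have "(\<Sum>a<n. B ^ a * v * B ^ (Suc n - 1 - a)) = (\<Sum>a<n. B ^ a * v * B ^ (n - 1 - a) * B)"
  proof (rule sum.cong)
    fix a assume "a \<in> {..<n}"
    then have "Suc n - 1 - a = Suc (n - 1 - a)" by auto
    then show "B ^ a * v * B ^ (Suc n - 1 - a) = B ^ a * v * B ^ (n - 1 - a) * B"
      by (simp only: power_Suc2 mult.assoc)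
  qed simp
  then show ?thesis unfolding power_linear_term_def by (simp add: sum_distrib_right)
qed

lemma power_linear_term_uminus: "power_linear_term B (- v) n = - power_linear_term B v n"
  by (simp add: power_linear_term_def sum_negf)

locale ring_filtration =
  fixes F :: "int \<Rightarrow> 'a::ring_1 \<Rightarrow> bool"
  assumes zero_mem [simp]: "F k 0"
    and one_mem: "F 0 1"
    and add_mem: "F k a \<Longrightarrow> F k b \<Longrightarrow> F k (a + b)"
    and uminus_mem: "F k a \<Longrightarrow> F k (- a)"
    and mult_mem: "F k a \<Longrightarrow> F m b \<Longrightarrow> F (k + m) (a * b)"
    and mono: "F k a \<Longrightarrow> k \<le> k' \<Longrightarrow> F k' a"
begin

lemma diff_mem: "F k a \<Longrightarrow> F k b \<Longrightarrow> F k (a - b)"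
  using add_mem[of k a "- b"] uminus_mem[of k b] by simp

lemma mult_mem_0: "F 0 a \<Longrightarrow> F 0 b \<Longrightarrow> F 0 (a * b)"
  using mult_mem[of 0 a 0 b] by simp

lemma sum_mem: "(\<And>x. x \<in> A \<Longrightarrow> F k (g x)) \<Longrightarrow> F k (sum g A)"
  by (induct A rule: infinite_finite_induct) (auto intro: add_mem)

lemma power_mem: "F k a \<Longrightarrow> F (int n * k) (a ^ n)"
proof (induct n)
  case 0 then show ?case using one_mem by simp
next
  case (Suc n)
  then show ?case
    using mult_mem[OF Suc(1) Suc(2)] by (simp add: power_Suc2 algebra_simps del: power_Suc)
qed

definition equiv_mod :: "'a \<Rightarrow> int \<Rightarrow> 'a \<Rightarrow> bool" where
  "equiv_mod a k b \<longleftrightarrow> F k (a - b)"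

lemma equiv_mod_refl [simp]: "equiv_mod a k a"
  by (simp add: equiv_mod_def)

lemma equiv_mod_sym: "equiv_mod a k b \<Longrightarrow> equiv_mod b k a"
  using uminus_mem[of k "a - b"] by (simp add: equiv_mod_def)

lemma equiv_mod_trans [trans]: "equiv_mod a k b \<Longrightarrow> equiv_mod b k c \<Longrightarrow> equiv_mod a k c"
  using add_mem[of k "a - b" "b - c"] by (simp add: equiv_mod_def)

lemma equiv_mod_add: "equiv_mod a k b \<Longrightarrow> equiv_mod a' k b' \<Longrightarrow> equiv_mod (a + a') k (b + b')"
  using add_mem[of k "a - b" "a' - b'"] by (simp add: equiv_mod_def algebra_simps)

lemma equiv_mod_lmult: "F m c \<Longrightarrow> equiv_mod a k b \<Longrightarrow> equiv_mod (c * a) (m + k) (c * b)"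
  using mult_mem[of m c k "a - b"] by (simp add: equiv_mod_def algebra_simps)

lemma equiv_mod_rmult: "equiv_mod a k b \<Longrightarrow> F m c \<Longrightarrow> equiv_mod (a * c) (k + m) (b * c)"
  using mult_mem[of k "a - b" m c] by (simp add: equiv_mod_def algebra_simps)

lemma equiv_mod_sum:
  "(\<And>x. x \<in> A \<Longrightarrow> equiv_mod (g x) k (h x)) \<Longrightarrow> equiv_mod (sum g A) k (sum h A)"
  using sum_mem[of A k "\<lambda>x. g x - h x"] by (simp add: equiv_mod_def sum_subtractf)

lemma power_linear_term_mem:
  assumes "F 1 B" and "F 0 v" shows "F (int n - 1) (power_linear_term B v n)"
  unfolding power_linear_term_def
proof (rule sum_mem)
  fix a assume "a \<in> {..<n}"
  then have "int a * 1 + 0 + int (n - 1 - a) * 1 = int n - 1" by auto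
  with mult_mem[OF mult_mem[OF power_mem[OF assms(1)] assms(2)] power_mem[OF assms(1)]]
  show "F (int n - 1) (B ^ a * v * B ^ (n - 1 - a))" by metis
qed

text \<open>A product of \<open>n\<close> factors \<open>B\<close> or \<open>v\<close> with at least two factors \<open>v\<close> lies in \<open>F (n - 2)\<close>.\<close>
lemma power_add_equiv_mod:
  assumes B: "F 1 B" and v: "F 0 v"
  shows "equiv_mod ((B + v) ^ n) (int n - 2) (B ^ n + power_linear_term B v n)"
  unfolding equiv_mod_def
proof (induct n)
  case 0 then show ?case by (simp add: power_linear_term_def)
next
  case (Suc n)
  have "F 1 (B + v)" using add_mem[OF B mono[OF v]] by simp
  from mult_mem[OF Suc this]
  have "F (int n - 1) (((B + v) ^ n - (B ^ n + power_linear_term B v n)) * (B + v))" by simp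
  moreover have "F (int n - 1) (power_linear_term B v n * v)"
    using mult_mem[OF power_linear_term_mem[OF B v] v] by simp
  ultimately have "F (int n - 1)
      (((B + v) ^ n - (B ^ n + power_linear_term B v n)) * (B + v) + power_linear_term B v n * v)"
    by (rule add_mem)
  moreover have "((B + v) ^ n - (B ^ n + power_linear_term B v n)) * (B + v)
      + power_linear_term B v n * v = (B + v) ^ Suc n - (B ^ Suc n + power_linear_term B v (Suc n))"
    unfolding power_linear_term_Suc power_Suc2 by (simp add: algebra_simps del: power_Suc)
  ultimately show ?case by simp
qed

end


section \<open>Words in the simple transpositions\<close>

lemma perm_of_word_Nil [simp]: "perm_of_word [] = id"
  by (simp add: perm_of_word_def)

lemma perm_of_word_Cons: "perm_of_word (i # ws) = simple_transp i \<circ> perm_of_word ws"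
  by (simp add: perm_of_word_def)

lemma perm_of_word_append: "perm_of_word (ws @ vs) = perm_of_word ws \<circ> perm_of_word vs"
  by (induct ws) (simp_all add: perm_of_word_Cons)

lemma simple_transp_involution: "simple_transp i \<circ> simple_transp i = id"
  by (auto simp: simple_transp_def fun_eq_iff)

lemma bij_perm_of_word: "bij (perm_of_word ws)"
proof (induct ws)
  case Nil then show ?case by (simp only: perm_of_word_Nil bij_id)
next
  case (Cons i ws)
  have "bij (simple_transp i)" using simple_transp_involution by (metis o_bij)
  with Cons show ?case unfolding perm_of_word_Cons by (rule bij_comp)
qed

lemma perm_of_word_fixes: "set ws \<subseteq> {1..<m} \<Longrightarrow> m < x \<Longrightarrow> perm_of_word ws x = x"
  by (induct ws) (auto simp: perm_of_word_Cons simple_transp_def)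

text \<open>Every word in \<open>s\<^sub>1, \<dots>, s\<^sub>m\<close> is
  equivalent to one in \<open>s\<^sub>1, \<dots>, s\<^sub>m\<^sub>-\<^sub>1\<close> followed by a chain.\<close>
definition chain :: "nat \<Rightarrow> nat \<Rightarrow> nat list" where
  "chain m k = rev [k..<Suc m]"

lemma chain_empty [simp]: "chain m (Suc m) = []"
  by (simp add: chain_def)

lemma chain_snoc: "k \<le> m \<Longrightarrow> chain m k = chain m (Suc k) @ [k]"
  by (simp add: chain_def upt_conv_Cons)

lemma set_chain [simp]: "set (chain m k) = {k..m}"
  by (auto simp: chain_def)

lemma perm_of_chain: "k \<le> Suc m \<Longrightarrow> perm_of_word (chain m k) k = Suc m"
proof (induct "Suc m - k" arbitrary: k)
  case 0 then have "k = Suc m" by simp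
  then show ?case by simp
next
  case (Suc n)
  then have "perm_of_word (chain m k) k = perm_of_word (chain m (Suc k)) (Suc k)"
    by (simp add: chain_snoc perm_of_word_append perm_of_word_Cons simple_transp_def)
  also have "\<dots> = Suc m" using Suc by simp
  finally show ?case .
qed

lemma chain_split: "k < i \<Longrightarrow> i \<le> m \<Longrightarrow> chain m k = chain m (Suc i) @ [i, i - 1] @ rev [k..<i - 1]"
proof -
  assume "k < i" "i \<le> m"
  then have "[k..<Suc m] = [k..<i - 1] @ [i - 1..<Suc m]"
    using upt_add_eq_append[of k "i - 1" "Suc m - (i - 1)"] by simp
  also have "[i - 1..<Suc m] = [i - 1, i] @ [Suc i..<Suc m]"
    using \<open>k < i\<close> \<open>i \<le> m\<close> by (simp add: upt_conv_Cons)
  finally show ?thesis by (simp add: chain_def)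
qed

primrec transp_word :: "nat \<Rightarrow> nat \<Rightarrow> nat list" where
  "transp_word j 0 = []"
| "transp_word j (Suc i) = (if i = j then [j] else i # transp_word j i @ [i])"

lemma perm_of_transp_word:
  "j < i \<Longrightarrow> perm_of_word (transp_word j i) = id(i := j, j := i) \<and> set (transp_word j i) \<subseteq> {j..<i}"
proof (induct i)
  case 0 then show ?case by simp
next
  case (Suc i)
  show ?case
  proof (cases "i = j")
    case True
    then show ?thesis by (auto simp: perm_of_word_Cons simple_transp_def fun_eq_iff)
  next
    case False
    with Suc have "j < i" by simp
    with Suc.hyps have IH: "perm_of_word (transp_word j i) = id(i := j, j := i)"
      "set (transp_word j i) \<subseteq> {j..<i}" by auto
    have "perm_of_word (transp_word j (Suc i))
        = simple_transp i \<circ> id(i := j, j := i) \<circ> simple_transp i"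
      using False IH by (simp add: perm_of_word_Cons perm_of_word_append o_assoc)
    also have "\<dots> = id(Suc i := j, j := Suc i)"
      using \<open>j < i\<close> by (auto simp: simple_transp_def fun_eq_iff)
    finally show ?thesis using False IH \<open>j < i\<close> by auto
  qed
qed

lemma cycle_of_pair: "a \<noteq> b \<Longrightarrow> cycle_of [a, b] = id(a := b, b := a)"
proof (rule ext)
  fix x assume ab: "a \<noteq> b"
  have "(THE k. k < Suc (Suc 0) \<and> [a, b] ! k = a) = 0"
    by (rule the_equality) (use ab in \<open>auto simp: less_Suc_eq\<close>)
  moreover have "(THE k. k < Suc (Suc 0) \<and> [a, b] ! k = b) = 1"
    by (rule the_equality) (use ab in \<open>auto simp: less_Suc_eq\<close>)
  ultimately show "cycle_of [a, b] x = (id(a := b, b := a)) x"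
    using ab by (auto simp: cycle_of_def)
qed


lemma Word_Nil_eq_zero: "Word [] = 0"
  by (simp add: zero_word_def)

lemma sc_one [simp]: "sc 1 = (1 :: 'r::comm_ring_1 FA)"
  by (simp add: sc_def Word_Nil_eq_zero)

lemma sc_zero [simp]: "sc 0 = (0 :: 'r::comm_ring_1 FA)"
  by (simp add: sc_def)

lemma sc_uminus [simp]: "sc (- r) = - (sc r :: 'r::comm_ring_1 FA)"
  by (simp add: sc_def single_uminus)

lemma lprod_Nil [simp]: "lprod [] = 1"
  by (simp add: lprod_def)

lemma lprod_Cons [simp]: "lprod (x # xs) = x * lprod xs"
  by (simp add: lprod_def)

lemma lprod_append [simp]: "lprod (xs @ ys) = lprod xs * lprod ys"
  by (induct xs) (simp_all add: mult.assoc)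

lemma num_x_plus [simp]: "num_x (u + v) = num_x u + num_x v"
  by (cases u; cases v) (simp add: num_x_def plus_word_def)

lemma mem_ideal_Sf_uminus: "a \<in> ideal_Sf d f \<Longrightarrow> - a \<in> ideal_Sf d f"
  using two_sided_ideal.lmult[of a "relators d f" "- 1"] by (simp add: ideal_Sf_def)

definition Sf_eq :: "nat \<Rightarrow> 'r::comm_ring_1 poly \<Rightarrow> 'r FA \<Rightarrow> 'r FA \<Rightarrow> bool" where
  "Sf_eq d f a b \<longleftrightarrow> a - b \<in> ideal_Sf d f"

lemma Sf_eq_refl [simp]: "Sf_eq d f a a"
  by (simp add: Sf_eq_def ideal_Sf_def two_sided_ideal.zero)

lemma Sf_eq_sym: "Sf_eq d f a b \<Longrightarrow> Sf_eq d f b a"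
  using mem_ideal_Sf_uminus[of "a - b"] by (simp add: Sf_eq_def)

lemma Sf_eq_trans [trans]: "Sf_eq d f a b \<Longrightarrow> Sf_eq d f b c \<Longrightarrow> Sf_eq d f a c"
  using two_sided_ideal.add[of "a - b" "relators d f" "b - c"] by (simp add: Sf_eq_def ideal_Sf_def)

lemma Sf_eq_add: "Sf_eq d f a b \<Longrightarrow> Sf_eq d f a' b' \<Longrightarrow> Sf_eq d f (a + a') (b + b')"
  using two_sided_ideal.add[of "a - b" "relators d f" "a' - b'"]
  by (simp add: Sf_eq_def ideal_Sf_def algebra_simps)

lemma Sf_eq_uminus: "Sf_eq d f a b \<Longrightarrow> Sf_eq d f (- a) (- b)"
  using mem_ideal_Sf_uminus[of "a - b"] by (simp add: Sf_eq_def algebra_simps)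

lemma Sf_eq_diff: "Sf_eq d f a b \<Longrightarrow> Sf_eq d f a' b' \<Longrightarrow> Sf_eq d f (a - a') (b - b')"
  using Sf_eq_add[of d f a b "- a'" "- b'"] Sf_eq_uminus[of d f a' b'] by simp

lemma Sf_eq_mult: "Sf_eq d f a b \<Longrightarrow> Sf_eq d f a' b' \<Longrightarrow> Sf_eq d f (a * a') (b * b')"
proof -
  assume "Sf_eq d f a b" "Sf_eq d f a' b'"
  then have "(a - b) * a' + b * (a' - b') \<in> ideal_Sf d f"
    unfolding Sf_eq_def ideal_Sf_def
    by (intro two_sided_ideal.add two_sided_ideal.lmult two_sided_ideal.rmult)
  then show ?thesis by (simp add: Sf_eq_def algebra_simps)
qed

lemma Sf_eq_power: "Sf_eq d f a b \<Longrightarrow> Sf_eq d f (a ^ n) (b ^ n)"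
  by (induct n) (auto intro: Sf_eq_mult)

text \<open>Naming the set \<open>R\<close> of relators of one kind spares automation a search through the whole
  union \<open>relators d f\<close>.\<close>
lemma Sf_eq_relator: "a - b \<in> R \<Longrightarrow> R \<subseteq> relators d f \<Longrightarrow> Sf_eq d f a b"
  unfolding Sf_eq_def ideal_Sf_def by (auto intro: two_sided_ideal.gen)

lemma in_F_zero: "in_F d f k 0"
  unfolding in_F_def by (rule exI[of _ 0]) (simp add: ideal_Sf_def two_sided_ideal.zero)

lemma in_F_one: "in_F d f 0 1"
  unfolding in_F_def
  by (rule exI[of _ 1]) (simp add: ideal_Sf_def two_sided_ideal.zero num_x_def zero_word_def)

lemma in_F_mono: "in_F d f k a \<Longrightarrow> k \<le> m \<Longrightarrow> in_F d f m a"
  unfolding in_F_def by force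

lemma in_F_uminus: "in_F d f k a \<Longrightarrow> in_F d f k (- a)"
  unfolding in_F_def
proof (elim exE conjE)
  fix p assume "\<forall>w\<in>Poly_Mapping.keys p. int (num_x w) \<le> k" "a - p \<in> ideal_Sf d f"
  then show "\<exists>q. (\<forall>w\<in>Poly_Mapping.keys q. int (num_x w) \<le> k) \<and> - a - q \<in> ideal_Sf d f"
    using mem_ideal_Sf_uminus[of "a - p"] by (intro exI[of _ "- p"]) simp
qed

lemma in_F_add: "in_F d f k a \<Longrightarrow> in_F d f k b \<Longrightarrow> in_F d f k (a + b)"
  unfolding in_F_def
proof (elim exE conjE)
  fix p q assume p: "\<forall>w\<in>Poly_Mapping.keys p. int (num_x w) \<le> k" "a - p \<in> ideal_Sf d f"
    and q: "\<forall>w\<in>Poly_Mapping.keys q. int (num_x w) \<le> k" "b - q \<in> ideal_Sf d f"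
  have "\<forall>w\<in>Poly_Mapping.keys (p + q). int (num_x w) \<le> k"
    using p(1) q(1) keys_add[of p q] by blast
  moreover have "(a - p) + (b - q) \<in> ideal_Sf d f"
    using p(2) q(2) unfolding ideal_Sf_def by (rule two_sided_ideal.add)
  then have "a + b - (p + q) \<in> ideal_Sf d f" by (simp add: algebra_simps)
  ultimately show "\<exists>r. (\<forall>w\<in>Poly_Mapping.keys r. int (num_x w) \<le> k) \<and> a + b - r \<in> ideal_Sf d f"
    by blast
qed

lemma in_F_mult: "in_F d f k a \<Longrightarrow> in_F d f m b \<Longrightarrow> in_F d f (k + m) (a * b)"
  unfolding in_F_def
proof (elim exE conjE)
  fix p q assume p: "\<forall>w\<in>Poly_Mapping.keys p. int (num_x w) \<le> k" "a - p \<in> ideal_Sf d f"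
    and q: "\<forall>w\<in>Poly_Mapping.keys q. int (num_x w) \<le> m" "b - q \<in> ideal_Sf d f"
  have "\<forall>w\<in>Poly_Mapping.keys (p * q). int (num_x w) \<le> k + m"
  proof
    fix w assume "w \<in> Poly_Mapping.keys (p * q)"
    then obtain u v where "w = u + v" "u \<in> Poly_Mapping.keys p" "v \<in> Poly_Mapping.keys q"
      using keys_mult by blast
    with p(1) q(1) have "int (num_x u) \<le> k" "int (num_x v) \<le> m" by auto
    with \<open>w = u + v\<close> show "int (num_x w) \<le> k + m" by simp
  qed
  moreover have "(a - p) * b + p * (b - q) \<in> ideal_Sf d f"
    using p(2) q(2) unfolding ideal_Sf_def
    by (intro two_sided_ideal.add two_sided_ideal.lmult two_sided_ideal.rmult)
  then have "a * b - p * q \<in> ideal_Sf d f" by (simp add: algebra_simps)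
  ultimately show "\<exists>r. (\<forall>w\<in>Poly_Mapping.keys r. int (num_x w) \<le> k + m) \<and> a * b - r \<in> ideal_Sf d f"
    by blast
qed

interpretation Sf: ring_filtration "in_F d f" for d f
  by unfold_locales (fact in_F_zero in_F_one in_F_add in_F_uminus in_F_mult in_F_mono)+

lemma equiv_mod_of_Sf_eq: "Sf_eq d f a b \<Longrightarrow> Sf.equiv_mod d f a k b"
  unfolding Sf.equiv_mod_def in_F_def Sf_eq_def by (rule exI[of _ 0]) simp

lemma in_F_gen_el: "in_F d f (int (num_x (Word [g]))) (gen_el g)"
  unfolding in_F_def
  by (rule exI[of _ "gen_el g"]) (simp add: gen_el_def ideal_Sf_def two_sided_ideal.zero)

lemma in_F_xh: "in_F d f 1 (xh j)"
  using in_F_gen_el[of d f "X j"] by (simp add: num_x_def)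

lemma in_F_sh: "in_F d f 0 (sh j)"
  using in_F_gen_el[of d f "S j"] by (simp add: num_x_def)

lemma in_F_ch: "in_F d f 0 (ch j)"
  using in_F_gen_el[of d f "C j"] by (simp add: num_x_def)

lemma in_F_sc: "in_F d f 0 (sc r)"
  unfolding in_F_def
  by (rule exI[of _ "sc r"])
    (simp add: sc_def ideal_Sf_def two_sided_ideal.zero zero_word_def num_x_def)

lemma in_F_lprod: "(\<And>x. x \<in> set xs \<Longrightarrow> in_F d f 0 x) \<Longrightarrow> in_F d f 0 (lprod xs)"
  by (induct xs) (auto intro: Sf.one_mem Sf.mult_mem_0)

lemma in_F_perm_hat: "in_F d f 0 (perm_hat d p)"
  unfolding perm_hat_def by (rule in_F_lprod) (auto intro: in_F_sh)


section \<open>The elements \<open>(a, b)\<^sup>(\<^sup>0\<^sup>)\<close>\<close>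

text \<open>The two even \<open>\<alpha> \<in> \<int>\<^sub>2\<^sup>2\<close> are \<open>(0, 0)\<close> and \<open>(1, 1)\<close>, both with \<open>\<tau>\<^sub>\<alpha> = 1\<close>; for them
  \<open>h\<^sup>\<alpha>\<^sub>0(a, b) = h_pair l \<sigma> a b\<close> with \<open>\<sigma> = \<epsilon>\<^sup>\<alpha>\<^sub>2 = \<plusminus>1\<close>.\<close>
definition h_pair :: "nat \<Rightarrow> 'r::comm_ring_1 FA \<Rightarrow> nat \<Rightarrow> nat \<Rightarrow> 'r FA" where
  "h_pair l \<sigma> a b = (\<Sum>r<l. \<sigma> ^ (l - 1 - r) * (xh a ^ r * xh b ^ (l - 1 - r)))"

definition pair_elem :: "nat \<Rightarrow> nat \<Rightarrow> nat \<Rightarrow> nat \<Rightarrow> 'r::comm_ring_1 FA" where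
  "pair_elem d l a b = h_pair l 1 a b * perm_hat d (cycle_of [a, b])
     + h_pair l (- 1) a b * perm_hat d (cycle_of [a, b]) * (ch a * ch b)"

lemma length_2_conv: "length xs = 2 \<longleftrightarrow> (\<exists>x y. xs = [x, y])"
  by (auto simp: numeral_2_eq_2 length_Suc_conv)

lemma even_alphas_2: "{\<alpha>. length \<alpha> = 2 \<and> even (abs_alpha \<alpha>)} = {[False, False], [True, True]}"
proof (intro set_eqI iffI)
  fix \<alpha> assume "\<alpha> \<in> {\<alpha>. length \<alpha> = 2 \<and> even (abs_alpha \<alpha>)}"
  then obtain x y where "\<alpha> = [x, y]" "even (abs_alpha [x, y])" by (auto simp: length_2_conv)
  then show "\<alpha> \<in> {[False, False], [True, True]}" by (cases x; cases y) (simp_all add: abs_alpha_def)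
qed (auto simp: abs_alpha_def)

lemma compositions_2:
  assumes "1 \<le> (l::nat)"
  shows "{rs. length rs = 2 \<and> sum_list rs = l - 1} = (\<lambda>r. [r, l - 1 - r]) ` {..<l}"
proof (intro set_eqI iffI)
  fix rs assume "rs \<in> {rs. length rs = 2 \<and> sum_list rs = l - 1}"
  then obtain x y where "rs = [x, y]" "x + y = l - 1" by (auto simp: length_2_conv)
  moreover from this assms have "y = l - 1 - x" "x < l" by auto
  ultimately show "rs \<in> (\<lambda>r. [r, l - 1 - r]) ` {..<l}" by auto
qed (use assms in auto)

lemma h_hat_pair:
  assumes "1 \<le> l"
  shows "h_hat l \<alpha> 0 [a, b] =
    (\<Sum>r<l. (sc (eps_alpha \<alpha> 0) * xh a) ^ r * (sc (eps_alpha \<alpha> 1) * xh b) ^ (l - 1 - r))"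
proof -
  have "inj_on (\<lambda>r. [r, l - 1 - r]) {..<l}" by (auto simp: inj_on_def)
  moreover have "{rs. length rs = length [a, b] \<and> sum_list rs = (length [a, b] - 1) * (l - 1) + 0}
      = (\<lambda>r. [r, l - 1 - r]) ` {..<l}"
    using compositions_2[OF assms] by (simp add: numeral_2_eq_2)
  ultimately show ?thesis
    unfolding h_hat_def by (simp add: sum.reindex numeral_2_eq_2 upt_rec)
qed

lemma minus_one_power_commute: "(- 1) ^ n * a = a * ((- 1) ^ n :: 'a::ring_1)"
  by (cases "even n") simp_all

lemma h_pair_minus_one:
  "(\<Sum>r<l. (xh a :: 'r::comm_ring_1 FA) ^ r * (- xh b) ^ (l - 1 - r)) = h_pair l (- 1) a b"
  unfolding h_pair_def
  by (rule sum.cong) (simp_all add: power_minus[of "xh b"] minus_one_power_commute mult.assoc)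

lemma A_r_hat_pair: "1 \<le> l \<Longrightarrow> A_r_hat d l [a, b] 0 = (pair_elem d l a b :: 'r::comm_ring_1 FA)"
proof -
  assume l: "1 \<le> l"
  have tau: "tau_alpha [False, False] = (1::'r)" "tau_alpha [True, True] = (1::'r)"
    by (simp_all add: tau_alpha_def abs_alpha_def numeral_2_eq_2 lessThan_Suc)
  have c: "c_alpha_hat [False, False] [a, b] = 1" "c_alpha_hat [True, True] [a, b] = ch a * ch b"
    by (simp_all add: c_alpha_hat_def numeral_2_eq_2 upt_rec)
  have h: "h_hat l [False, False] 0 [a, b] = h_pair l 1 a b"
    "h_hat l [True, True] 0 [a, b] = h_pair l (- 1) a b"
    by (simp add: h_hat_pair[OF l] eps_alpha_def h_pair_def)
      (simp add: h_hat_pair[OF l] eps_alpha_def flip: h_pair_minus_one)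
  have "{\<alpha>. length \<alpha> = length [a, b] \<and> even (abs_alpha \<alpha>)} = {[False, False], [True, True]}"
    using even_alphas_2 by (simp add: numeral_2_eq_2)
  then show ?thesis
    unfolding A_r_hat_def A_r_alpha_hat_def pair_elem_def by (simp add: tau c h)
qed


definition sh_word :: "nat list \<Rightarrow> 'r::comm_ring_1 FA" where
  "sh_word ws = lprod (map sh ws)"

lemma sh_word_append: "sh_word (ws @ vs) = sh_word ws * sh_word vs"
  by (simp add: sh_word_def)

context
  fixes d :: nat and f :: "'r::comm_ring_1 poly"
begin

abbreviation Sf_equal :: "'r FA \<Rightarrow> 'r FA \<Rightarrow> bool" (infix \<open>\<doteq>\<close> 50) where
  "a \<doteq> b \<equiv> Sf_eq d f a b"

abbreviation F_equiv :: "'r FA \<Rightarrow> int \<Rightarrow> 'r FA \<Rightarrow> bool" (\<open>(_/ \<approx>[_]/ _)\<close> [51, 0, 51] 50) where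
  "a \<approx>[k] b \<equiv> Sf.equiv_mod d f a k b"

lemma Sf_eq_sh_sh: "i \<in> {1..<d} \<Longrightarrow> sh i * sh i \<doteq> 1"
  by (rule Sf_eq_relator[where R = "{sh i * sh i - 1 | i. 1 \<le> i \<and> i \<le> d - 1}"])
    (force, unfold relators_def, blast)

lemma Sf_eq_braid:
  "i \<in> {1..<d} \<Longrightarrow> i + 1 < d \<Longrightarrow> sh i * sh (i + 1) * sh i \<doteq> sh (i + 1) * sh i * sh (i + 1)"
  by (rule Sf_eq_relator[where R = "{sh i * sh (i+1) * sh i - sh (i+1) * sh i * sh (i+1)
                                      | i. 1 \<le> i \<and> i + 1 \<le> d - 1}"])
    (force, unfold relators_def, blast)

lemma Sf_eq_sh_commute:
  "i \<in> {1..<d} \<Longrightarrow> j \<in> {1..<d} \<Longrightarrow> i + 1 < j \<or> j + 1 < i \<Longrightarrow> sh i * sh j \<doteq> sh j * sh i"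
  by (rule Sf_eq_relator[where R = "{sh i * sh j - sh j * sh i | i j. 1 \<le> i \<and> i \<le> d - 1
                                      \<and> 1 \<le> j \<and> j \<le> d - 1 \<and> (i + 1 < j \<or> j + 1 < i)}"])
    (force, unfold relators_def, blast)

lemma Sf_eq_xh_ch_same: "i \<in> {1..d} \<Longrightarrow> xh i * ch i \<doteq> - (ch i * xh i)"
  by (rule Sf_eq_relator[where R = "{xh i * ch i + ch i * xh i | i. i \<in> {1..d}}"])
    (force, unfold relators_def, blast)

lemma Sf_eq_xh_ch: "i \<in> {1..d} \<Longrightarrow> j \<in> {1..d} \<Longrightarrow> i \<noteq> j \<Longrightarrow> xh i * ch j \<doteq> ch j * xh i"
  by (rule Sf_eq_relator[where R = "{xh i * ch j - ch j * xh i
                                      | i j. i \<in> {1..d} \<and> j \<in> {1..d} \<and> i \<noteq> j}"])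
    (force, unfold relators_def, blast)

lemma Sf_eq_sh_ch_same: "i \<in> {1..<d} \<Longrightarrow> sh i * ch i \<doteq> ch (i + 1) * sh i"
  by (rule Sf_eq_relator[where R = "{sh i * ch i - ch (i+1) * sh i | i. 1 \<le> i \<and> i \<le> d - 1}"])
    (force, unfold relators_def, blast)

lemma Sf_eq_sh_ch:
  "i \<in> {1..<d} \<Longrightarrow> j \<in> {1..d} \<Longrightarrow> j \<noteq> i \<Longrightarrow> j \<noteq> i + 1 \<Longrightarrow> sh i * ch j \<doteq> ch j * sh i"
  by (rule Sf_eq_relator[where R = "{sh i * ch j - ch j * sh i | i j. 1 \<le> i \<and> i \<le> d - 1
                                      \<and> j \<in> {1..d} \<and> j \<noteq> i \<and> j \<noteq> i + 1}"])
    (force, unfold relators_def, blast)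

lemma Sf_eq_sh_xh_same: "i \<in> {1..<d} \<Longrightarrow> sh i * xh i \<doteq> xh (i + 1) * sh i - 1 - ch i * ch (i + 1)"
  by (rule Sf_eq_relator[where R = "{sh i * xh i - (xh (i+1) * sh i - 1 - ch i * ch (i+1))
                                      | i. 1 \<le> i \<and> i \<le> d - 1}"])
    (force, unfold relators_def, blast)

lemma Sf_eq_sh_xh:
  "i \<in> {1..<d} \<Longrightarrow> j \<in> {1..d} \<Longrightarrow> j \<noteq> i \<Longrightarrow> j \<noteq> i + 1 \<Longrightarrow> sh i * xh j \<doteq> xh j * sh i"
  by (rule Sf_eq_relator[where R = "{sh i * xh j - xh j * sh i | i j. 1 \<le> i \<and> i \<le> d - 1
                                      \<and> j \<in> {1..d} \<and> j \<noteq> i \<and> j \<noteq> i + 1}"])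
    (force, unfold relators_def, blast)

lemma Sf_eq_f_xh_one: "(\<Sum>k\<le>degree f. sc (coeff f k) * xh 1 ^ k) \<doteq> 0"
  by (rule Sf_eq_relator[where R = "{\<Sum>k\<le>degree f. sc (coeff f k) * xh 1 ^ k}"])
    (simp, unfold relators_def, blast)

section \<open>Presentation of the symmetric group\<close>

definition word_equiv :: "nat list \<Rightarrow> nat list \<Rightarrow> bool" where
  "word_equiv ws vs \<longleftrightarrow> sh_word ws \<doteq> sh_word vs \<and> perm_of_word ws = perm_of_word vs"

lemma word_equiv_refl [simp]: "word_equiv ws ws"
  by (simp add: word_equiv_def)

lemma word_equiv_sym: "word_equiv ws vs \<Longrightarrow> word_equiv vs ws"
  unfolding word_equiv_def using Sf_eq_sym by metis

lemma word_equiv_trans [trans]: "word_equiv us vs \<Longrightarrow> word_equiv vs ws \<Longrightarrow> word_equiv us ws"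
  unfolding word_equiv_def using Sf_eq_trans by metis

lemma word_equiv_append:
  "word_equiv us vs \<Longrightarrow> word_equiv us' vs' \<Longrightarrow> word_equiv (us @ us') (vs @ vs')"
  unfolding word_equiv_def sh_word_append perm_of_word_append using Sf_eq_mult by metis

lemma word_equiv_cancel: "i \<in> {1..<d} \<Longrightarrow> word_equiv [i, i] []"
  using Sf_eq_sh_sh[of i]
  by (simp add: word_equiv_def sh_word_def perm_of_word_Cons simple_transp_involution)

lemma word_equiv_braid: "i \<in> {1..<d} \<Longrightarrow> i + 1 < d \<Longrightarrow> word_equiv [i, i + 1, i] [i + 1, i, i + 1]"
  using Sf_eq_braid[of i]
  by (simp add: word_equiv_def sh_word_def perm_of_word_Cons simple_transp_def fun_eq_iff
      mult.assoc)

lemma word_equiv_commute: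
  "i \<in> {1..<d} \<Longrightarrow> j \<in> {1..<d} \<Longrightarrow> i + 1 < j \<or> j + 1 < i \<Longrightarrow> word_equiv [i, j] [j, i]"
  using Sf_eq_sh_commute[of i j]
  by (auto simp: word_equiv_def sh_word_def perm_of_word_Cons simple_transp_def fun_eq_iff)

lemma word_equiv_commute_word:
  assumes "set ws \<subseteq> {1..<d}" "i \<in> {1..<d}" "\<forall>j\<in>set ws. j + 1 < i \<or> i + 1 < j"
  shows "word_equiv (ws @ [i]) (i # ws)"
  using assms
proof (induct ws)
  case Nil then show ?case by simp
next
  case (Cons j ws)
  then have "word_equiv ([j] @ ws @ [i]) ([j] @ i # ws)" by (intro word_equiv_append) auto
  moreover have "word_equiv ([j, i] @ ws) ([i, j] @ ws)"
    using Cons by (intro word_equiv_append word_equiv_commute) auto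
  ultimately show ?case by (auto intro: word_equiv_trans)
qed

text \<open>The only nontrivial case of appending a letter to a chain: \<open>s\<^sub>i\<close> passes the letters below
  \<open>i - 1\<close>, a braid relation turns \<open>s\<^sub>i s\<^sub>i\<^sub>-\<^sub>1 s\<^sub>i\<close> into \<open>s\<^sub>i\<^sub>-\<^sub>1 s\<^sub>i s\<^sub>i\<^sub>-\<^sub>1\<close>, and the
  leftmost \<open>s\<^sub>i\<^sub>-\<^sub>1\<close> passes the letters above \<open>i\<close>.\<close>
lemma word_equiv_chain_snoc_above:
  assumes "1 \<le> k" "k < i" "i \<le> m" "m < d"
  shows "word_equiv (chain m k @ [i]) ((i - 1) # chain m k)"
proof -
  define A where "A = chain m (Suc i)"
  define B where "B = rev [k..<i - 1]"
  have split: "chain m k = A @ [i, i - 1] @ B"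
    using chain_split[of k i m] assms unfolding A_def B_def by simp
  have "word_equiv (B @ [i]) (i # B)"
    using assms by (intro word_equiv_commute_word) (auto simp: B_def)
  from word_equiv_append[OF word_equiv_refl this, of "A @ [i, i - 1]"]
  have e1: "word_equiv (chain m k @ [i]) (A @ [i, i - 1, i] @ B)"
    unfolding split by simp
  have "i - 1 \<in> {1..<d}" "i - 1 + 1 < d" "i - 1 + 1 = i" using assms by auto
  then have "word_equiv [i, i - 1, i] [i - 1, i, i - 1]"
    using word_equiv_braid[of "i - 1"] word_equiv_sym by simp
  from word_equiv_append[OF word_equiv_refl word_equiv_append[OF this word_equiv_refl], of A B]
  have e2: "word_equiv (A @ [i, i - 1, i] @ B) (A @ [i - 1, i, i - 1] @ B)" by simp
  have "word_equiv (A @ [i - 1]) ((i - 1) # A)"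
    using assms by (intro word_equiv_commute_word) (auto simp: A_def)
  from word_equiv_append[OF this word_equiv_refl, of "[i, i - 1] @ B"]
  have e3: "word_equiv (A @ [i - 1, i, i - 1] @ B) ((i - 1) # chain m k)"
    unfolding split by simp
  show ?thesis by (rule word_equiv_trans[OF word_equiv_trans[OF e1 e2] e3])
qed

lemma word_equiv_chain_snoc:
  assumes "m < d" "i \<in> {1..m}" "1 \<le> k" "k \<le> Suc m"
  obtains ws k' where "set ws \<subseteq> {1..<m}" "1 \<le> k'" "k' \<le> Suc m"
    "word_equiv (chain m k @ [i]) (ws @ chain m k')"
proof -
  have "k = Suc m \<and> i = m \<or> k = Suc m \<and> i < m \<or> k \<le> m \<and> i = k \<or> k \<le> m \<and> Suc i = k
    \<or> Suc i < k \<or> k < i"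
    using assms(2-4) by auto
  then consider "k = Suc m" "i = m" | "k = Suc m" "i < m" | "k \<le> m" "i = k" | "k \<le> m" "Suc i = k"
    | "Suc i < k" | "k < i"
    by blast
  then show ?thesis
  proof cases
    case 1 then show ?thesis using that[of "[]" m] assms by (simp add: chain_snoc)
  next
    case 2 then show ?thesis using that[of "[i]" "Suc m"] assms by simp
  next
    case 3
    have "word_equiv (chain m (Suc k) @ [k, k]) (chain m (Suc k) @ [])"
      using 3 assms by (intro word_equiv_append word_equiv_cancel) auto
    then show ?thesis using that[of "[]" "Suc k"] 3 by (simp add: chain_snoc)
  next
    case 4 then show ?thesis using that[of "[]" i] assms by (simp add: chain_snoc[of i m])
  next
    case 5
    have "word_equiv (chain m k @ [i]) (i # chain m k)"
      using 5 assms by (intro word_equiv_commute_word) auto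
    then show ?thesis using that[of "[i]" k] 5 assms by simp
  next
    case 6
    show ?thesis
      by (rule that[of "[i - 1]" k]) (use 6 assms word_equiv_chain_snoc_above[of k i m] in auto)
  qed
qed

lemma word_equiv_normal_form:
  "m < d \<Longrightarrow> set ws \<subseteq> {1..m} \<Longrightarrow>
    \<exists>vs k. set vs \<subseteq> {1..<m} \<and> 1 \<le> k \<and> k \<le> Suc m \<and> word_equiv ws (vs @ chain m k)"
proof (induct ws rule: rev_induct)
  case Nil then show ?case by (intro exI[of _ "[]"] exI[of _ "Suc m"]) simp
next
  case (snoc i ws)
  then obtain vs k where vs: "set vs \<subseteq> {1..<m}" "1 \<le> k" "k \<le> Suc m" "word_equiv ws (vs @ chain m k)"
    by auto
  obtain us k' where us: "set us \<subseteq> {1..<m}" "1 \<le> k'" "k' \<le> Suc m"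
    "word_equiv (chain m k @ [i]) (us @ chain m k')"
    using word_equiv_chain_snoc[of m i k] snoc.prems vs(2,3) by auto
  have "word_equiv (ws @ [i]) (vs @ chain m k @ [i])"
    using word_equiv_append[OF vs(4) word_equiv_refl] by simp
  also have "word_equiv (vs @ chain m k @ [i]) ((vs @ us) @ chain m k')"
    using word_equiv_append[OF word_equiv_refl us(4)] by simp
  finally show ?case using vs us by (intro exI[of _ "vs @ us"] exI[of _ k']) auto
qed

text \<open>The Coxeter relations present the symmetric group.  Induction on the number of letters,
  via the normal form: the chain parts of two normal forms of the same permutation agree,
  since \<open>chain m k\<close> is determined by the preimage \<open>k\<close> of \<open>m + 1\<close>.\<close>
lemma word_equiv_of_perm_eq:
  "n \<le> d \<Longrightarrow> set ws \<subseteq> {1..<n} \<Longrightarrow> set vs \<subseteq> {1..<n} \<Longrightarrow> perm_of_word ws = perm_of_word vs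
    \<Longrightarrow> word_equiv ws vs"
proof (induct n arbitrary: ws vs)
  case 0 then show ?case by simp
next
  case (Suc m)
  show ?case
  proof (cases "m = 0")
    case True then show ?thesis using Suc by simp
  next
    case False
    have m: "m < d" using Suc by simp
    have "set ws \<subseteq> {1..m}" "set vs \<subseteq> {1..m}" using Suc.prems by auto
    then obtain ws' k vs' k' where
      ws': "set ws' \<subseteq> {1..<m}" "1 \<le> k" "k \<le> Suc m" "word_equiv ws (ws' @ chain m k)" and
      vs': "set vs' \<subseteq> {1..<m}" "1 \<le> k'" "k' \<le> Suc m" "word_equiv vs (vs' @ chain m k')"
      using word_equiv_normal_form[OF m] by meson
    define P where "P = perm_of_word ws"
    have P: "P = perm_of_word ws' \<circ> perm_of_word (chain m k)"
      "P = perm_of_word vs' \<circ> perm_of_word (chain m k')"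
      using ws'(4) vs'(4) unfolding P_def Suc.prems(4) word_equiv_def perm_of_word_append by blast+
    have "P k = Suc m"
      using perm_of_chain[OF ws'(3)] perm_of_word_fixes[OF ws'(1)] by (simp add: P(1))
    moreover have "P k' = Suc m"
      using perm_of_chain[OF vs'(3)] perm_of_word_fixes[OF vs'(1)] by (simp add: P(2))
    moreover have "inj P" unfolding P_def by (rule bij_is_inj[OF bij_perm_of_word])
    ultimately have "k = k'" by (metis injD)
    with P have "perm_of_word ws' = perm_of_word vs'"
      by (metis bij_is_surj bij_perm_of_word surj_fun_eq)
    then have "word_equiv ws' vs'" using Suc.hyps m ws'(1) vs'(1) by simp
    then have "word_equiv (ws' @ chain m k) (vs' @ chain m k')"
      using \<open>k = k'\<close> by (simp add: word_equiv_append)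
    then show ?thesis
      by (rule word_equiv_trans[OF ws'(4) word_equiv_trans[OF _ word_equiv_sym[OF vs'(4)]]])
  qed
qed

text \<open>\<open>perm_hat\<close> chooses an arbitrary word by \<open>SOME\<close>; all choices give the same element.\<close>
lemma perm_hat_Sf_eq: "set ws \<subseteq> {1..<d} \<Longrightarrow> perm_hat d (perm_of_word ws) \<doteq> sh_word ws"
proof -
  assume ws: "set ws \<subseteq> {1..<d}"
  let ?P = "\<lambda>vs. set vs \<subseteq> {1..<d} \<and> perm_of_word vs = perm_of_word ws"
  have "?P (SOME vs. ?P vs)" by (rule someI[of ?P ws]) (use ws in simp)
  then have "word_equiv (SOME vs. ?P vs) ws" using word_equiv_of_perm_eq[of d _ ws] ws by auto
  then show ?thesis unfolding perm_hat_def word_equiv_def sh_word_def by auto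
qed

lemma perm_hat_transp_Sf_eq:
  assumes "1 \<le> j" "j < i" "i \<le> d"
  shows "perm_hat d (cycle_of [i, j]) \<doteq> sh_word (transp_word j i)"
proof -
  have "set (transp_word j i) \<subseteq> {1..<d}" using perm_of_transp_word[of j i] assms by auto
  from perm_hat_Sf_eq[OF this] show ?thesis
    using perm_of_transp_word[of j i] assms by (simp add: cycle_of_pair)
qed

lemma perm_hat_adjacent_Sf_eq: "i \<in> {1..<d} \<Longrightarrow> perm_hat d (cycle_of [i + 1, i]) \<doteq> sh i"
  using perm_hat_transp_Sf_eq[of i "Suc i"] by (simp add: sh_word_def)

lemma perm_hat_conj_Sf_eq:
  assumes "1 \<le> j" "j < i" "i < d"
  shows "sh i * perm_hat d (cycle_of [i, j]) * sh i \<doteq> perm_hat d (cycle_of [i + 1, j])"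
proof -
  have "sh i * perm_hat d (cycle_of [i, j]) * sh i \<doteq> sh i * sh_word (transp_word j i) * sh i"
    using assms by (intro Sf_eq_mult Sf_eq_refl perm_hat_transp_Sf_eq) auto
  also have "sh i * sh_word (transp_word j i) * sh i = sh_word (transp_word j (Suc i))"
    using assms by (simp add: sh_word_def mult.assoc)
  also have "\<dots> \<doteq> perm_hat d (cycle_of [i + 1, j])"
    using Sf_eq_sym[OF perm_hat_transp_Sf_eq[of j "Suc i"]] assms by simp
  finally show ?thesis .
qed


declare Sf.equiv_mod_trans [trans]

lemma F_equiv_Sf_eq_trans [trans]: "a \<approx>[k] b \<Longrightarrow> b \<doteq> c \<Longrightarrow> a \<approx>[k] c"
  using Sf.equiv_mod_trans equiv_mod_of_Sf_eq by blast

lemma Sf_eq_F_equiv_trans [trans]: "a \<doteq> b \<Longrightarrow> b \<approx>[k] c \<Longrightarrow> a \<approx>[k] c"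
  using Sf.equiv_mod_trans equiv_mod_of_Sf_eq by blast

lemma Sf_eq_flip:
  assumes ss: "s * s \<doteq> 1" and h: "s * a \<doteq> b * s"
  shows "a * s \<doteq> s * b"
proof -
  have "a * s \<doteq> (s * s) * (a * s)"
    using Sf_eq_mult[OF Sf_eq_sym[OF ss] Sf_eq_refl, of "a * s"] by simp
  also have "\<dots> = s * (s * a) * s" by (simp add: mult.assoc)
  also have "\<dots> \<doteq> s * (b * s) * s" by (intro Sf_eq_mult h Sf_eq_refl)
  also have "\<dots> = (s * b) * (s * s)" by (simp add: mult.assoc)
  also have "\<dots> \<doteq> s * b" using Sf_eq_mult[OF Sf_eq_refl ss, of "s * b"] by simp
  finally show ?thesis .
qed

lemma F_equiv_flip:
  assumes ss: "s * s \<doteq> 1" and s: "in_F d f 0 s" and h: "s * a \<approx>[k] b * s"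
  shows "a * s \<approx>[k] s * b"
proof -
  have "a * s \<doteq> (s * s) * (a * s)"
    using Sf_eq_mult[OF Sf_eq_sym[OF ss] Sf_eq_refl, of "a * s"] by simp
  also have "\<dots> = s * (s * a) * s" by (simp add: mult.assoc)
  also have "\<dots> \<approx>[k] s * (b * s) * s"
    using Sf.equiv_mod_rmult[OF Sf.equiv_mod_lmult[OF s h] s] by simp
  also have "\<dots> = (s * b) * (s * s)" by (simp add: mult.assoc)
  also have "\<dots> \<doteq> s * b" using Sf_eq_mult[OF Sf_eq_refl ss, of "s * b"] by simp
  finally show ?thesis .
qed

lemma sh_xh_equiv:
  assumes i: "i \<in> {1..<d}" and a: "a \<in> {1..d}"
  shows "sh i * xh a \<approx>[0] xh (simple_transp i a) * sh i"
proof -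
  have same: "sh i * xh i \<approx>[0] xh (i + 1) * sh i"
  proof -
    let ?u = "1 + ch i * ch (i + 1)"
    have "in_F d f 0 ?u" by (intro Sf.add_mem Sf.one_mem Sf.mult_mem_0 in_F_ch)
    with equiv_mod_of_Sf_eq[OF Sf_eq_sh_xh_same[OF i]]
    have "in_F d f 0 (sh i * xh i - (xh (i + 1) * sh i - 1 - ch i * ch (i + 1)) - ?u)"
      unfolding Sf.equiv_mod_def by (rule Sf.diff_mem)
    then show ?thesis by (simp add: Sf.equiv_mod_def algebra_simps)
  qed
  consider "a = i" | "a = i + 1" | "a \<noteq> i" "a \<noteq> i + 1" by blast
  then show ?thesis
  proof cases
    case 1 then show ?thesis using same by (simp add: simple_transp_def)
  next
    case 2
    have "xh i * sh i \<approx>[0] sh i * xh (i + 1)"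
      by (rule F_equiv_flip[OF Sf_eq_sh_sh[OF i] in_F_sh same])
    then show ?thesis using 2 Sf.equiv_mod_sym by (simp add: simple_transp_def)
  next
    case 3
    then show ?thesis
      using equiv_mod_of_Sf_eq[OF Sf_eq_sh_xh[OF i a]] by (simp add: simple_transp_def)
  qed
qed

lemma sh_xh_power_equiv:
  assumes i: "i \<in> {1..<d}" and a: "a \<in> {1..d}"
  shows "sh i * xh a ^ n \<approx>[int n - 1] xh (simple_transp i a) ^ n * sh i"
proof (induct n)
  case 0 then show ?case by simp
next
  case (Suc n)
  let ?a = "simple_transp i a"
  have "sh i * xh a ^ Suc n = (sh i * xh a ^ n) * xh a"
    by (simp add: power_Suc2 mult.assoc del: power_Suc)
  also have "\<dots> \<approx>[int n - 1 + 1] (xh ?a ^ n * sh i) * xh a"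
    by (rule Sf.equiv_mod_rmult[OF Suc in_F_xh])
  finally have 1: "sh i * xh a ^ Suc n \<approx>[int n] xh ?a ^ n * (sh i * xh a)"
    by (simp add: mult.assoc)
  have "xh ?a ^ n * (sh i * xh a) \<approx>[int n * 1 + 0] xh ?a ^ n * (xh ?a * sh i)"
    by (rule Sf.equiv_mod_lmult[OF Sf.power_mem[OF in_F_xh] sh_xh_equiv[OF i a]])
  then have 2: "xh ?a ^ n * (sh i * xh a) \<approx>[int n] xh ?a ^ Suc n * sh i"
    by (simp add: power_Suc2 mult.assoc del: power_Suc)
  from Sf.equiv_mod_trans[OF 1 2] show ?case by simp
qed

lemma sh_monomial_equiv:
  assumes i: "i \<in> {1..<d}" and a: "a \<in> {1..d}" and b: "b \<in> {1..d}"
  shows "sh i * (xh a ^ r * xh b ^ t)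
    \<approx>[int r + int t - 1] xh (simple_transp i a) ^ r * xh (simple_transp i b) ^ t * sh i"
proof -
  let ?a = "simple_transp i a" and ?b = "simple_transp i b"
  have "sh i * (xh a ^ r * xh b ^ t) = (sh i * xh a ^ r) * xh b ^ t" by (simp add: mult.assoc)
  also have "\<dots> \<approx>[int r - 1 + int t * 1] (xh ?a ^ r * sh i) * xh b ^ t"
    by (rule Sf.equiv_mod_rmult[OF sh_xh_power_equiv[OF i a] Sf.power_mem[OF in_F_xh]])
  finally have 1: "sh i * (xh a ^ r * xh b ^ t) \<approx>[int r + int t - 1] xh ?a ^ r * (sh i * xh b ^ t)"
    by (simp add: mult.assoc algebra_simps)
  have "xh ?a ^ r * (sh i * xh b ^ t) \<approx>[int r * 1 + (int t - 1)] xh ?a ^ r * (xh ?b ^ t * sh i)"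
    by (rule Sf.equiv_mod_lmult[OF Sf.power_mem[OF in_F_xh] sh_xh_power_equiv[OF i b]])
  then have 2: "xh ?a ^ r * (sh i * xh b ^ t) \<approx>[int r + int t - 1] xh ?a ^ r * xh ?b ^ t * sh i"
    by (simp add: mult.assoc algebra_simps)
  show ?thesis by (rule Sf.equiv_mod_trans[OF 1 2])
qed

lemma sh_ch_Sf_eq:
  assumes i: "i \<in> {1..<d}" and a: "a \<in> {1..d}"
  shows "sh i * ch a \<doteq> ch (simple_transp i a) * sh i"
proof -
  consider "a = i" | "a = i + 1" | "a \<noteq> i" "a \<noteq> i + 1" by blast
  then show ?thesis
  proof cases
    case 1 then show ?thesis using Sf_eq_sh_ch_same[OF i] by (simp add: simple_transp_def)
  next
    case 2
    have "ch i * sh i \<doteq> sh i * ch (i + 1)"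
      by (rule Sf_eq_flip[OF Sf_eq_sh_sh[OF i] Sf_eq_sh_ch_same[OF i]])
    then show ?thesis using 2 Sf_eq_sym by (simp add: simple_transp_def)
  next
    case 3 then show ?thesis using Sf_eq_sh_ch[OF i a] by (simp add: simple_transp_def)
  qed
qed

lemma ch_sh_Sf_eq:
  assumes i: "i \<in> {1..<d}" and a: "a \<in> {1..d}"
  shows "ch a * sh i \<doteq> sh i * ch (simple_transp i a)"
proof -
  have "simple_transp i a \<in> {1..d}" "simple_transp i (simple_transp i a) = a"
    using i a by (auto simp: simple_transp_def)
  with sh_ch_Sf_eq[OF i, of "simple_transp i a"] show ?thesis by (simp add: Sf_eq_sym)
qed

lemma Sf_eq_conj_power: "s * s \<doteq> 1 \<Longrightarrow> (s * a * s) ^ n \<doteq> s * a ^ n * s"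
proof (induct n)
  case 0 then show ?case by (simp add: Sf_eq_sym)
next
  case (Suc n)
  have "(s * a * s) ^ Suc n = (s * a * s) ^ n * (s * a * s)" by (rule power_Suc2)
  also have "\<dots> \<doteq> (s * a ^ n * s) * (s * a * s)" by (intro Sf_eq_mult Suc Sf_eq_refl)
  also have "\<dots> = (s * a ^ n) * (s * s) * (a * s)" by (simp add: mult.assoc)
  also have "\<dots> \<doteq> (s * a ^ n) * 1 * (a * s)" by (intro Sf_eq_mult Suc Sf_eq_refl)
  also have "\<dots> = s * a ^ Suc n * s" by (simp add: power_Suc2 mult.assoc del: power_Suc)
  finally show ?case .
qed

lemma Sf_eq_anticommute_power:
  "c * x \<doteq> - (x * c) \<Longrightarrow> c * x ^ n \<doteq> (- 1) ^ n * (x ^ n * c)"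
proof (induct n)
  case 0 then show ?case by simp
next
  case (Suc n)
  have "c * x ^ Suc n = (c * x ^ n) * x" by (simp add: power_Suc2 mult.assoc del: power_Suc)
  also have "\<dots> \<doteq> ((- 1) ^ n * (x ^ n * c)) * x" by (intro Sf_eq_mult Suc Sf_eq_refl)
  also have "\<dots> = (- 1) ^ n * x ^ n * (c * x)" by (simp add: mult.assoc)
  also have "\<dots> \<doteq> (- 1) ^ n * x ^ n * (- (x * c))" by (intro Sf_eq_mult Suc Sf_eq_refl)
  also have "\<dots> = (- 1) ^ Suc n * (x ^ Suc n * c)"
    by (simp add: power_Suc2 mult.assoc del: power_Suc)
  finally show ?case .
qed

definition xh_Suc_defect :: "nat \<Rightarrow> 'r FA" where
  "xh_Suc_defect i = (1 + ch i * ch (i + 1)) * sh i"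

lemma in_F_xh_Suc_defect: "in_F d f 0 (xh_Suc_defect i)"
  unfolding xh_Suc_defect_def by (intro Sf.mult_mem_0 Sf.add_mem Sf.one_mem in_F_ch in_F_sh)

lemma xh_Suc_Sf_eq:
  assumes i: "i \<in> {1..<d}"
  shows "xh (i + 1) \<doteq> sh i * xh i * sh i + xh_Suc_defect i"
proof -
  have "sh i * xh i * sh i + xh_Suc_defect i
      \<doteq> (xh (i + 1) * sh i - 1 - ch i * ch (i + 1)) * sh i + xh_Suc_defect i"
    by (intro Sf_eq_add Sf_eq_mult Sf_eq_sh_xh_same[OF i] Sf_eq_refl)
  also have "\<dots> = xh (i + 1) * (sh i * sh i)" by (simp add: xh_Suc_defect_def algebra_simps)
  also have "\<dots> \<doteq> xh (i + 1) * 1" by (intro Sf_eq_mult Sf_eq_refl Sf_eq_sh_sh[OF i])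
  finally show ?thesis by (simp add: Sf_eq_sym)
qed


lemma ch_ch_xh_Sf_eq:
  assumes i: "i \<in> {1..<d}"
  shows "ch i * ch (i + 1) * xh i \<doteq> - (xh i * (ch i * ch (i + 1)))"
proof -
  have ii: "i \<in> {1..d}" "i + 1 \<in> {1..d}" using i by auto
  have "ch i * ch (i + 1) * xh i = ch i * (ch (i + 1) * xh i)" by (simp add: mult.assoc)
  also have "\<dots> \<doteq> ch i * (xh i * ch (i + 1))"
    by (rule Sf_eq_mult[OF Sf_eq_refl Sf_eq_sym[OF Sf_eq_xh_ch]]) (use ii in auto)
  also have "\<dots> = (ch i * xh i) * ch (i + 1)" by (simp add: mult.assoc)
  also have "\<dots> \<doteq> (- (xh i * ch i)) * ch (i + 1)"
    using Sf_eq_sym[OF Sf_eq_uminus[OF Sf_eq_xh_ch_same[OF ii(1)]]]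
    by (intro Sf_eq_mult[OF _ Sf_eq_refl]) simp
  finally show ?thesis by (simp add: mult.assoc)
qed

lemma ch_ch_sh_Sf_eq:
  assumes i: "i \<in> {1..<d}"
  shows "ch i * ch (i + 1) * sh i \<doteq> sh i * (ch (i + 1) * ch i)"
proof -
  have ii: "i \<in> {1..d}" "i + 1 \<in> {1..d}" using i by auto
  have "ch i * ch (i + 1) * sh i = ch i * (ch (i + 1) * sh i)" by (simp add: mult.assoc)
  also have "\<dots> \<doteq> ch i * (sh i * ch i)"
    by (rule Sf_eq_mult[OF Sf_eq_refl])
      (use ch_sh_Sf_eq[OF i ii(2)] in \<open>simp add: simple_transp_def\<close>)
  also have "\<dots> = (ch i * sh i) * ch i" by (simp add: mult.assoc)
  also have "\<dots> \<doteq> (sh i * ch (i + 1)) * ch i"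
    by (rule Sf_eq_mult[OF _ Sf_eq_refl])
      (use ch_sh_Sf_eq[OF i ii(1)] in \<open>simp add: simple_transp_def\<close>)
  finally show ?thesis by (simp add: mult.assoc)
qed


section \<open>The leading term of \<open>x\<^sub>i\<^sup>l\<close>\<close>

lemma in_F_sign: "\<sigma> \<in> {1, - 1} \<Longrightarrow> in_F d f 0 \<sigma>"
  using in_F_sc[of d f 1] in_F_sc[of d f "- 1"] by auto

lemma in_F_h_pair: "\<sigma> \<in> {1, - 1} \<Longrightarrow> in_F d f (int l - 1) (h_pair l \<sigma> a b)"
  unfolding h_pair_def
proof (rule Sf.sum_mem)
  fix r assume \<sigma>: "\<sigma> \<in> {1, - 1}" and r: "r \<in> {..<l}"
  have "in_F d f (int (l - 1 - r) * 0 + (int r * 1 + int (l - 1 - r) * 1))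
      (\<sigma> ^ (l - 1 - r) * (xh a ^ r * xh b ^ (l - 1 - r)))"
    by (intro Sf.mult_mem Sf.power_mem in_F_xh in_F_sign[OF \<sigma>])
  moreover have "int (l - 1 - r) * 0 + (int r * 1 + int (l - 1 - r) * 1) = int l - 1"
    using r by auto
  ultimately show "in_F d f (int l - 1) (\<sigma> ^ (l - 1 - r) * (xh a ^ r * xh b ^ (l - 1 - r)))" by simp
qed

lemma in_F_pair_elem: "in_F d f (int l - 1) (pair_elem d l a b)"
proof -
  have "in_F d f (int l - 1 + 0) (h_pair l 1 a b * perm_hat d (cycle_of [a, b]))"
    by (intro Sf.mult_mem in_F_h_pair in_F_perm_hat) simp
  moreover have "in_F d f (int l - 1 + 0 + 0)
      (h_pair l (- 1) a b * perm_hat d (cycle_of [a, b]) * (ch a * ch b))"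
    by (intro Sf.mult_mem Sf.mult_mem_0 in_F_h_pair in_F_perm_hat in_F_ch) simp
  ultimately show ?thesis unfolding pair_elem_def by (intro Sf.add_mem) simp_all
qed

lemma sh_h_pair_equiv:
  assumes i: "i \<in> {1..<d}" and a: "a \<in> {1..d}" and b: "b \<in> {1..d}" and \<sigma>: "\<sigma> \<in> {1, - 1}"
  shows "sh i * h_pair l \<sigma> a b
    \<approx>[int l - 2] h_pair l \<sigma> (simple_transp i a) (simple_transp i b) * sh i"
  unfolding h_pair_def sum_distrib_left sum_distrib_right
proof (rule Sf.equiv_mod_sum)
  fix r assume r: "r \<in> {..<l}"
  let ?e = "l - 1 - r"
  have central: "sh i * \<sigma> ^ ?e = \<sigma> ^ ?e * sh i" using \<sigma> by (auto simp: minus_one_power_commute)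
  have "sh i * (\<sigma> ^ ?e * (xh a ^ r * xh b ^ ?e)) = \<sigma> ^ ?e * (sh i * (xh a ^ r * xh b ^ ?e))"
    by (simp only: central mult.assoc[symmetric])
  also have "\<dots> \<approx>[int ?e * 0 + (int r + int ?e - 1)]
      \<sigma> ^ ?e * (xh (simple_transp i a) ^ r * xh (simple_transp i b) ^ ?e * sh i)"
    by (rule Sf.equiv_mod_lmult[OF Sf.power_mem[OF in_F_sign[OF \<sigma>]] sh_monomial_equiv[OF i a b]])
  finally show "sh i * (\<sigma> ^ ?e * (xh a ^ r * xh b ^ ?e))
      \<approx>[int l - 2] \<sigma> ^ ?e * (xh (simple_transp i a) ^ r * xh (simple_transp i b) ^ ?e) * sh i"
    using r by (simp add: mult.assoc)
qed

lemma Sf_eq_conj_mult: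
  assumes "s * s \<doteq> 1" shows "s * (p * q) * s \<doteq> (s * p * s) * (s * q * s)"
proof -
  have "s * (p * q) * s = (s * p) * 1 * (q * s)" by (simp add: mult.assoc)
  also have "\<dots> \<doteq> (s * p) * (s * s) * (q * s)" by (intro Sf_eq_mult Sf_eq_refl Sf_eq_sym[OF assms])
  also have "\<dots> = (s * p * s) * (s * q * s)" by (simp add: mult.assoc)
  finally show ?thesis .
qed

lemma conj_mult_equiv:
  assumes "in_F d f 0 s" "in_F d f 0 q" "s * a \<approx>[k] a' * s" "s * q * s \<doteq> q'"
  shows "s * (a * q) * s \<approx>[k] a' * q'"
proof -
  have "s * (a * q) * s = (s * a) * (q * s)" by (simp add: mult.assoc)
  also have "\<dots> \<approx>[k + 0] (a' * s) * (q * s)"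
    by (rule Sf.equiv_mod_rmult[OF assms(3) Sf.mult_mem_0[OF assms(2,1)]])
  also have "(a' * s) * (q * s) = a' * (s * q * s)" by (simp add: mult.assoc)
  also have "\<dots> \<doteq> a' * q'" by (intro Sf_eq_mult Sf_eq_refl assms(4))
  finally show ?thesis by simp
qed

lemma conj_pair_elem:
  assumes "1 \<le> j" "j < i" "i < d"
  shows "sh i * pair_elem d l i j * sh i \<approx>[int l - 2] pair_elem d l (i + 1) j"
proof -
  have i: "i \<in> {1..<d}" and ij: "i \<in> {1..d}" "j \<in> {1..d}" using assms by auto
  have t: "simple_transp i i = i + 1" "simple_transp i j = j"
    using assms by (simp_all add: simple_transp_def)
  let ?P = "perm_hat d (cycle_of [i, j])" and ?P' = "perm_hat d (cycle_of [i + 1, j])"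
  have h: "sh i * h_pair l \<sigma> i j \<approx>[int l - 2] h_pair l \<sigma> (i + 1) j * sh i" if "\<sigma> \<in> {1, - 1}" for \<sigma>
    using sh_h_pair_equiv[OF i ij that] t by simp
  have P: "sh i * ?P * sh i \<doteq> ?P'" by (rule perm_hat_conj_Sf_eq[OF assms])
  have "sh i * (ch i * ch j) * sh i = (sh i * ch i) * (ch j * sh i)" by (simp add: mult.assoc)
  also have "\<dots> \<doteq> (ch (i + 1) * sh i) * (sh i * ch j)"
    by (rule Sf_eq_mult) (use sh_ch_Sf_eq[OF i ij(1)] ch_sh_Sf_eq[OF i ij(2)] t in simp_all)
  also have "\<dots> = ch (i + 1) * (sh i * sh i) * ch j" by (simp add: mult.assoc)
  also have "\<dots> \<doteq> ch (i + 1) * 1 * ch j" by (intro Sf_eq_mult Sf_eq_refl Sf_eq_sh_sh[OF i])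
  finally have C: "sh i * (ch i * ch j) * sh i \<doteq> ch (i + 1) * ch j" by simp
  have "sh i * (?P * (ch i * ch j)) * sh i \<doteq> ?P' * (ch (i + 1) * ch j)"
    using Sf_eq_conj_mult[OF Sf_eq_sh_sh[OF i]] Sf_eq_mult[OF P C] by (rule Sf_eq_trans)
  then have "sh i * (h_pair l (- 1) i j * (?P * (ch i * ch j))) * sh i
      \<approx>[int l - 2] h_pair l (- 1) (i + 1) j * (?P' * (ch (i + 1) * ch j))"
    by (intro conj_mult_equiv h in_F_sh Sf.mult_mem_0 in_F_perm_hat in_F_ch) simp
  moreover have "sh i * (h_pair l 1 i j * ?P) * sh i \<approx>[int l - 2] h_pair l 1 (i + 1) j * ?P'"
    by (intro conj_mult_equiv h in_F_sh in_F_perm_hat P) simp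
  ultimately show ?thesis
    unfolding pair_elem_def using Sf.equiv_mod_add by (simp add: algebra_simps)
qed

text \<open>Moving \<open>c\<^sub>i c\<^sub>i\<^sub>+\<^sub>1\<close> past \<open>x\<^sub>i\<^sup>b\<close> produces the sign \<open>(-1)\<^sup>b\<close> of \<open>h\<^sup>\<alpha>\<close> for \<open>\<alpha> = (1, 1)\<close>.\<close>
lemma linear_term_summand_equiv:
  assumes i: "i \<in> {1..<d}" and "a < l"
  defines "b \<equiv> l - 1 - a"
  shows "xh (i + 1) ^ a * xh_Suc_defect i * xh (i + 1) ^ b
    \<approx>[int l - 2] xh (i + 1) ^ a * xh i ^ b * sh i
      + (- 1) ^ b * (xh (i + 1) ^ a * xh i ^ b) * sh i * (ch (i + 1) * ch i)"
proof -
  let ?x = "xh (i + 1)" and ?y = "xh i" and ?s = "sh i"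
  let ?cc = "ch i * ch (i + 1)" and ?C = "ch (i + 1) * ch i"
  have "i + 1 \<in> {1..d}" using i by auto
  from sh_xh_power_equiv[OF i this] have "?s * ?x ^ b \<approx>[int b - 1] ?y ^ b * ?s"
    by (simp add: simple_transp_def)
  then have "?x ^ a * ((1 + ?cc) * (?s * ?x ^ b))
      \<approx>[int a * 1 + (0 + (int b - 1))] ?x ^ a * ((1 + ?cc) * (?y ^ b * ?s))"
    by (intro Sf.equiv_mod_lmult Sf.power_mem in_F_xh Sf.add_mem Sf.one_mem Sf.mult_mem_0 in_F_ch)
  moreover have "int a * 1 + (0 + (int b - 1)) = int l - 2" using \<open>a < l\<close> unfolding b_def by auto
  ultimately have "?x ^ a * ((1 + ?cc) * (?s * ?x ^ b))
      \<approx>[int l - 2] ?x ^ a * ((1 + ?cc) * (?y ^ b * ?s))"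
    by (simp only:)
  then have "?x ^ a * ((1 + ?cc) * ?s) * ?x ^ b
      \<approx>[int l - 2] ?x ^ a * (?y ^ b * ?s + (?cc * ?y ^ b) * ?s)"
    by (simp add: algebra_simps)
  also have "\<dots> \<doteq> ?x ^ a * (?y ^ b * ?s + (- 1) ^ b * ?y ^ b * (?cc * ?s))"
    using Sf_eq_mult[OF Sf_eq_anticommute_power[OF ch_ch_xh_Sf_eq[OF i], of b] Sf_eq_refl, of ?s]
    by (intro Sf_eq_mult[OF Sf_eq_refl] Sf_eq_add[OF Sf_eq_refl]) (simp add: mult.assoc)
  also have "\<dots> \<doteq> ?x ^ a * (?y ^ b * ?s + (- 1) ^ b * ?y ^ b * (?s * ?C))"
    by (intro Sf_eq_mult[OF Sf_eq_refl] Sf_eq_add[OF Sf_eq_refl] ch_ch_sh_Sf_eq[OF i])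
  also have "\<dots> = ?x ^ a * ?y ^ b * ?s + (- 1) ^ b * (?x ^ a * ?y ^ b) * ?s * ?C"
    by (simp add: distrib_left mult.assoc minus_one_power_commute)
  finally show ?thesis unfolding xh_Suc_defect_def .
qed

lemma linear_term_equiv_pair_elem:
  assumes i: "i \<in> {1..<d}"
  shows "power_linear_term (xh (i + 1)) (xh_Suc_defect i) l \<approx>[int l - 2] pair_elem d l (i + 1) i"
proof -
  let ?x = "xh (i + 1)" and ?y = "xh i" and ?s = "sh i" and ?C = "ch (i + 1) * ch i"
  have "power_linear_term ?x (xh_Suc_defect i) l \<approx>[int l - 2]
      (\<Sum>a<l. ?x ^ a * ?y ^ (l - 1 - a) * ?s
        + (- 1) ^ (l - 1 - a) * (?x ^ a * ?y ^ (l - 1 - a)) * ?s * ?C)"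
    unfolding power_linear_term_def
    by (rule Sf.equiv_mod_sum) (rule linear_term_summand_equiv[OF i], simp)
  also have "\<dots> = h_pair l 1 (i + 1) i * ?s + h_pair l (- 1) (i + 1) i * ?s * ?C"
    unfolding h_pair_def by (simp add: sum.distrib sum_distrib_right)
  also have "\<dots> \<doteq> pair_elem d l (i + 1) i"
    unfolding pair_elem_def
    using Sf_eq_sym[OF perm_hat_adjacent_Sf_eq[OF i]] by (intro Sf_eq_add Sf_eq_mult Sf_eq_refl)
  finally show ?thesis .
qed


lemma xh_one_power_mem:
  assumes "degree f = l" "lead_coeff f = 1" "\<And>k. coeff f k \<noteq> 0 \<Longrightarrow> even (l + k)"
  shows "in_F d f (int l - 2) (xh 1 ^ l)"
proof -
  let ?S = "\<Sum>k<l. sc (coeff f k) * xh 1 ^ k"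
  have "?S + xh 1 ^ l \<doteq> 0"
    using Sf_eq_f_xh_one assms(1,2) by (simp add: lessThan_Suc_atMost[symmetric])
  from equiv_mod_of_Sf_eq[OF this, of "int l - 2"]
  have ideal: "in_F d f (int l - 2) (?S + xh 1 ^ l)" by (simp add: Sf.equiv_mod_def)
  have "in_F d f (int l - 2) ?S"
  proof (rule Sf.sum_mem)
    fix k assume "k \<in> {..<l}"
    show "in_F d f (int l - 2) (sc (coeff f k) * xh 1 ^ k)"
    proof (cases "coeff f k = 0")
      case False
      \<comment> \<open>\<open>f\<close> has the parity of \<open>l\<close>, so its lower terms have degree at most \<open>l - 2\<close>\<close>
      with assms(3) have "even (l + k)" by blast
      with \<open>k \<in> {..<l}\<close> have "int k \<le> int l - 2" by (cases "k + 1 = l") auto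
      moreover have "in_F d f (0 + int k * 1) (sc (coeff f k) * xh 1 ^ k)"
        by (intro Sf.mult_mem in_F_sc Sf.power_mem in_F_xh)
      ultimately show ?thesis by (simp add: Sf.mono)
    qed simp
  qed
  from Sf.diff_mem[OF ideal this] show ?thesis by simp
qed

lemma xh_Suc_power_equiv:
  assumes i: "i \<in> {1..<d}"
  shows "xh (i + 1) ^ l
    \<approx>[int l - 2] sh i * xh i ^ l * sh i + power_linear_term (xh (i + 1)) (xh_Suc_defect i) l"
proof -
  let ?u = "xh_Suc_defect i"
  have "xh (i + 1) - ?u \<doteq> sh i * xh i * sh i"
    using Sf_eq_diff[OF xh_Suc_Sf_eq[OF i] Sf_eq_refl, of ?u] by simp
  then have x_u: "(xh (i + 1) - ?u) ^ l \<doteq> sh i * xh i ^ l * sh i"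
    by (rule Sf_eq_trans[OF Sf_eq_power Sf_eq_conj_power[OF Sf_eq_sh_sh[OF i]]])
  have "xh (i + 1) ^ l = (xh (i + 1) ^ l + power_linear_term (xh (i + 1)) (- ?u) l)
      + power_linear_term (xh (i + 1)) ?u l"
    by (simp add: power_linear_term_uminus)
  also have "\<dots> \<approx>[int l - 2] (xh (i + 1) + - ?u) ^ l + power_linear_term (xh (i + 1)) ?u l"
    by (intro Sf.equiv_mod_add Sf.equiv_mod_refl Sf.equiv_mod_sym[OF Sf.power_add_equiv_mod] in_F_xh
        Sf.uminus_mem in_F_xh_Suc_defect)
  also have "\<dots> \<doteq> sh i * xh i ^ l * sh i + power_linear_term (xh (i + 1)) ?u l"
    using x_u by (intro Sf_eq_add Sf_eq_refl) simp
  finally show ?thesis .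
qed

lemma xh_power_equiv_sum_pair_elem:
  assumes "degree f = l" "lead_coeff f = 1" "\<And>k. coeff f k \<noteq> 0 \<Longrightarrow> even (l + k)"
  shows "n \<in> {1..d} \<Longrightarrow> xh n ^ l \<approx>[int l - 2] (\<Sum>j\<in>{1..<n}. pair_elem d l n j)"
proof (induct n)
  case 0 then show ?case by simp
next
  case (Suc n)
  show ?case
  proof (cases "n = 0")
    case True
    then show ?thesis using xh_one_power_mem[OF assms] by (simp add: Sf.equiv_mod_def)
  next
    case False
    with Suc.prems have n: "n \<in> {1..<d}" by auto
    let ?Y = "\<Sum>j\<in>{1..<n}. pair_elem d l n j" and ?T = "power_linear_term (xh (n + 1)) (xh_Suc_defect n) l"
    from Suc.hyps n have IH: "xh n ^ l \<approx>[int l - 2] ?Y" by simp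
    have "xh (n + 1) ^ l \<approx>[int l - 2] sh n * xh n ^ l * sh n + ?T"
      by (rule xh_Suc_power_equiv[OF n])
    also have "\<dots> \<approx>[int l - 2] sh n * ?Y * sh n + ?T"
      using Sf.equiv_mod_add[OF Sf.equiv_mod_rmult[OF Sf.equiv_mod_lmult[OF in_F_sh IH] in_F_sh]
          Sf.equiv_mod_refl] by simp
    also have "sh n * ?Y * sh n = (\<Sum>j\<in>{1..<n}. sh n * pair_elem d l n j * sh n)"
      by (simp add: sum_distrib_left sum_distrib_right)
    also have "\<dots> + ?T \<approx>[int l - 2] (\<Sum>j\<in>{1..<n}. pair_elem d l (n + 1) j) + pair_elem d l (n + 1) n"
      using n
      by (intro Sf.equiv_mod_add Sf.equiv_mod_sum conj_pair_elem linear_term_equiv_pair_elem) auto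
    also have "\<dots> = (\<Sum>j\<in>{1..<Suc n}. pair_elem d l (Suc n) j)"
      using n by (simp add: atLeastLessThanSuc add.commute)
    finally show ?thesis by simp
  qed
qed

end

theorem mainTheorem7:
  fixes f :: "'r::comm_ring_1 poly" and l d i :: nat
  assumes "l \<ge> 1" and "d \<ge> 1"
    and "degree f = l" and "lead_coeff f = 1"
    and "\<And>k. coeff f k \<noteq> 0 \<Longrightarrow> even (l + k)"
    and "i \<in> {1..d}"
  shows "in_F d f (int l - 1) ((xh i :: 'r FA) ^ l)
       \<and> in_F d f (int l - 2) ((xh i :: 'r FA) ^ l - y_hat d l i)"
proof -
  have y: "y_hat d l i = (\<Sum>j\<in>{1..<i}. pair_elem d l i j :: 'r FA)"
    unfolding y_hat_def by (simp add: A_r_hat_pair[OF assms(1)])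
  have lower: "in_F d f (int l - 2) ((xh i :: 'r FA) ^ l - y_hat d l i)"
    using xh_power_equiv_sum_pair_elem[OF assms(3-5,6)] unfolding y Sf.equiv_mod_def .
  have "in_F d f (int l - 1) (y_hat d l i :: 'r FA)"
    unfolding y by (intro Sf.sum_mem in_F_pair_elem)
  with Sf.add_mem[OF Sf.mono[OF lower] this] have "in_F d f (int l - 1) ((xh i :: 'r FA) ^ l)"
    by simp
  with lower show ?thesis by blast
qed

end
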